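(* Let $\mathcal{L}$ be a triangulation with branching structure of a closed 3-manifold $\mathcal{M}^3$, carrying three copies of the $\mathbb{Z}_2$ toric code as described in the context. Let $\alpha_2$ be a 2-cycle of $\mathcal{L}$ (a set of triangles forming a $\mathbb{Z}_2$-cycle) and let $i\neq j\in\{1,2,3\}$. Define $$U'_{i,j}(\alpha_2)=\prod_{[v_0v_1v_2]\in\alpha_2}\mathrm{CZ}\big(q^{(i)}_{[v_0v_1]},q^{(j)}_{[v_1v_2]}\big)=(-1)^{\int_{\alpha_2}a^{(i)}\cup a^{(j)}}.$$ Then $U'_{i,j}(\alpha_2)$ preserves the code space, and on it $$U'_{i,j}(\alpha_2)=\prod_{\beta^1,\gamma^1\in B^1}\overline{\mathrm{CZ}}\big[(\beta^1;i),(\gamma^1;j)\big]^{\int_{\mathcal{M}^3}\alpha^1\cup\beta^1\cup\gamma^1},$$ where $\alpha^1\in H^1(\mathcal{M}^3;\mathbb{Z}_2)$ is the Poincaré dual of $[\alpha_2]$.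
   Context: Toric code copy $k$: one qubit $q^{(k)}_e$ per edge; $X$-stabilizers $\prod_{e\ni v}X^{(k)}_e$ on vertices; $Z$-stabilizers $\prod_{e\subset f}Z^{(k)}_e$ on triangles. The $\{0,1\}$-valued operator cochain $a^{(k)}$ satisfies $(-1)^{a^{(k)}(e)}=Z^{(k)}_e$; cup products on ordered simplices are $(\alpha\cup\beta)([v_0v_1v_2])=\alpha([v_0v_1])\beta([v_1v_2])$, with $v_0\prec v_1\prec v_2$ from the branching structure. On the code space $da^{(k)}=0$. Fix a basis $B^1$ of $H^1(\mathcal{M}^3;\mathbb{Z}_2)$; writing $[a^{(k)}]=\sum_{\beta}m^{(k)}_\beta\beta^1$, the logical qubit $(\beta^1;k)$ has computational basis value $m^{(k)}_\beta\in\{0,1\}$, and $\overline{\mathrm{CZ}}[(\beta^1;i),(\gamma^1;j)]$ acts as $(-1)^{m^{(i)}_\beta m^{(j)}_\gamma}$. *)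

theory Defs
  imports Complex_Main
begin

text \<open>A 3-dimensional simplicial complex is given by its set K of tetrahedra
(4-element vertex sets); its faces are all nonempty subsets of tetrahedra.\<close>

definition verts :: "'v set set \<Rightarrow> 'v set" where
  "verts K = \<Union>K"

definition edges :: "'v set set \<Rightarrow> 'v set set" where
  "edges K = {e. card e = 2 \<and> (\<exists>t\<in>K. e \<subseteq> t)}"

definition tris :: "'v set set \<Rightarrow> 'v set set" where
  "tris K = {f. card f = 3 \<and> (\<exists>t\<in>K. f \<subseteq> t)}"

definition graph_connected :: "'v set set \<Rightarrow> bool" where
  "graph_connected G \<longleftrightarrow>
     (\<forall>u\<in>\<Union>G. \<forall>w\<in>\<Union>G. (\<lambda>x y. {x, y} \<in> G)\<^sup>*\<^sup>* u w)"

definition edges2 :: "'v set set \<Rightarrow> 'v set set" where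
  "edges2 L = {e. card e = 2 \<and> (\<exists>f\<in>L. e \<subseteq> f)}"

definition link2 :: "'v set set \<Rightarrow> 'v \<Rightarrow> 'v set set" where
  "link2 L w = {f - {w} | f. f \<in> L \<and> w \<in> f}"

definition closed_surface :: "'v set set \<Rightarrow> bool" where
  "closed_surface L \<longleftrightarrow> finite L \<and> (\<forall>f\<in>L. card f = 3) \<and>
     (\<forall>e\<in>edges2 L. card {f\<in>L. e \<subseteq> f} = 2) \<and>
     (\<forall>w\<in>\<Union>L. graph_connected (link2 L w))"

definition sphere2 :: "'v set set \<Rightarrow> bool" where
  "sphere2 L \<longleftrightarrow> closed_surface L \<and> graph_connected (edges2 L) \<and>
     int (card (\<Union>L)) - int (card (edges2 L)) + int (card L) = 2"

definition vlink :: "'v set set \<Rightarrow> 'v \<Rightarrow> 'v set set" where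
  "vlink K v = {t - {v} | t. t \<in> K \<and> v \<in> t}"

text \<open>Triangulation of a closed 3-manifold: finite, and the link of every vertex
is a triangulated 2-sphere (combinatorial 3-manifold; in dimension 3 every
triangulation of a topological manifold is of this kind).\<close>
definition closed_3manifold :: "'v set set \<Rightarrow> bool" where
  "closed_3manifold K \<longleftrightarrow> finite K \<and> (\<forall>t\<in>K. card t = 4) \<and>
     (\<forall>v\<in>verts K. sphere2 (vlink K v))"

text \<open>A branching structure: every edge is oriented (br u w means u \<prec> w), and
no triangle is an oriented cycle (the orientation is transitive on every triangle).\<close>
definition branching :: "'v set set \<Rightarrow> ('v \<Rightarrow> 'v \<Rightarrow> bool) \<Rightarrow> bool" where
  "branching K br \<longleftrightarrow> (\<forall>x. \<not> br x x) \<and>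
     (\<forall>e\<in>edges K. \<forall>u\<in>e. \<forall>w\<in>e. u \<noteq> w \<longrightarrow> (br u w \<longleftrightarrow> \<not> br w u)) \<and>
     (\<forall>f\<in>tris K. \<forall>x\<in>f. \<forall>y\<in>f. \<forall>z\<in>f. br x y \<longrightarrow> br y z \<longrightarrow> br x z)"

definition olist :: "('v \<Rightarrow> 'v \<Rightarrow> bool) \<Rightarrow> 'v set \<Rightarrow> 'v list" where
  "olist br s = (THE xs. set xs = s \<and> sorted_wrt br xs)"

section \<open>Z2 cochains (nat-valued, read modulo 2)\<close>

definition cocycle1 :: "'v set set \<Rightarrow> ('v set \<Rightarrow> nat) \<Rightarrow> bool" where
  "cocycle1 K a \<longleftrightarrow> (\<forall>f\<in>tris K. even (\<Sum>e\<in>{e. e \<subseteq> f \<and> card e = 2}. a e))"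

text \<open>a and b differ by a coboundary d\<lambda> (mod 2) on all edges.\<close>
definition cohomologous1 :: "'v set set \<Rightarrow> ('v set \<Rightarrow> nat) \<Rightarrow> ('v set \<Rightarrow> nat) \<Rightarrow> bool" where
  "cohomologous1 K a b \<longleftrightarrow>
     (\<exists>lam::'v \<Rightarrow> nat. \<forall>e\<in>edges K. even (a e + b e + (\<Sum>v\<in>e. lam v)))"

text \<open>(beta b) for b in B are 1-cocycles whose classes form a basis of H^1(M;Z2):
every 1-cocycle is cohomologous to a unique Z2-combination of them.\<close>
definition cohom_basis :: "'v set set \<Rightarrow> 'b set \<Rightarrow> ('b \<Rightarrow> 'v set \<Rightarrow> nat) \<Rightarrow> bool" where
  "cohom_basis K B beta \<longleftrightarrow> finite B \<and> (\<forall>b\<in>B. cocycle1 K (beta b)) \<and>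
     (\<forall>a. cocycle1 K a \<longrightarrow>
        (\<exists>!m. (\<forall>b\<in>B. m b \<in> {0, 1}) \<and> (\<forall>b. b \<notin> B \<longrightarrow> m b = 0) \<and>
              cohomologous1 K a (\<lambda>e. \<Sum>b\<in>B. m b * beta b e)))"

definition coeff :: "'v set set \<Rightarrow> 'b set \<Rightarrow> ('b \<Rightarrow> 'v set \<Rightarrow> nat) \<Rightarrow> ('v set \<Rightarrow> nat) \<Rightarrow> 'b \<Rightarrow> nat" where
  "coeff K B beta a = (THE m. (\<forall>b\<in>B. m b \<in> {0, 1}) \<and> (\<forall>b. b \<notin> B \<longrightarrow> m b = 0) \<and>
              cohomologous1 K a (\<lambda>e. \<Sum>b\<in>B. m b * beta b e))"

definition cup3 :: "('v \<Rightarrow> 'v \<Rightarrow> bool) \<Rightarrow> ('v set \<Rightarrow> nat) \<Rightarrow> ('v set \<Rightarrow> nat) \<Rightarrow> ('v set \<Rightarrow> nat)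
     \<Rightarrow> 'v set \<Rightarrow> nat" where
  "cup3 br a b c t = (let xs = olist br t in
      a {xs!0, xs!1} * b {xs!1, xs!2} * c {xs!2, xs!3})"

definition cycle2 :: "'v set set \<Rightarrow> 'v set set \<Rightarrow> bool" where
  "cycle2 K A \<longleftrightarrow> A \<subseteq> tris K \<and> (\<forall>e\<in>edges K. even (card {f\<in>A. e \<subseteq> f}))"

text \<open>Cap product of the Z2 fundamental class [M] (sum of all tetrahedra) with a
1-cochain: ([v0v1v2v3] cap a) = a([v0v1]) [v1v2v3]; value on triangle f.\<close>
definition capM :: "'v set set \<Rightarrow> ('v \<Rightarrow> 'v \<Rightarrow> bool) \<Rightarrow> ('v set \<Rightarrow> nat) \<Rightarrow> 'v set \<Rightarrow> nat" where
  "capM K br a f = (\<Sum>t\<in>{t\<in>K. (let xs = olist br t in f = {xs!1, xs!2, xs!3})}.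
       (let xs = olist br t in a {xs!0, xs!1}))"

text \<open>alpha1 is a 1-cocycle representing the Poincare dual of [A]:
[M] cap [alpha1] = [A] in H_2(M;Z2), i.e. they differ by the boundary of a 3-chain C.\<close>
definition poincare_dual :: "'v set set \<Rightarrow> ('v \<Rightarrow> 'v \<Rightarrow> bool) \<Rightarrow> 'v set set \<Rightarrow> ('v set \<Rightarrow> nat) \<Rightarrow> bool" where
  "poincare_dual K br A alpha1 \<longleftrightarrow> cocycle1 K alpha1 \<and>
     (\<exists>C\<subseteq>K. \<forall>f\<in>tris K.
        even (capM K br alpha1 f + (if f \<in> A then 1 else 0) + card {t\<in>C. f \<subseteq> t}))"

text \<open>Computational basis states: z k e is the Z-basis bit of qubit q^(k)_e.
States are complex amplitude functions on basis configurations.\<close>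
type_synonym 'v config = "nat \<Rightarrow> 'v set \<Rightarrow> bool"
type_synonym 'v state = "'v config \<Rightarrow> complex"

definition valid_config :: "'v set set \<Rightarrow> 'v config \<Rightarrow> bool" where
  "valid_config K z \<longleftrightarrow> (\<forall>k e. z k e \<longrightarrow> k \<in> {1, 2, 3} \<and> e \<in> edges K)"

definition hilbert :: "'v set set \<Rightarrow> 'v state set" where
  "hilbert K = {\<psi>. \<forall>z. \<not> valid_config K z \<longrightarrow> \<psi> z = 0}"

text \<open>Vertex stabilizer prod_{e \<ni> v} X^(k)_e (flips the bits).\<close>
definition Xstab :: "'v set set \<Rightarrow> nat \<Rightarrow> 'v \<Rightarrow> 'v state \<Rightarrow> 'v state" where
  "Xstab K k v \<psi> = (\<lambda>z. \<psi> (\<lambda>k' e. if k' = k \<and> e \<in> edges K \<and> v \<in> e then \<not> z k' e else z k' e))"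

text \<open>Triangle stabilizer prod_{e \<subset> f} Z^(k)_e.\<close>
definition Zstab :: "'v set set \<Rightarrow> nat \<Rightarrow> 'v set \<Rightarrow> 'v state \<Rightarrow> 'v state" where
  "Zstab K k f \<psi> = (\<lambda>z. (-1) ^ card {e. e \<subseteq> f \<and> card e = 2 \<and> z k e} * \<psi> z)"

definition code_space :: "'v set set \<Rightarrow> 'v state set" where
  "code_space K = {\<psi>. \<psi> \<in> hilbert K \<and>
     (\<forall>k\<in>{1, 2, 3}. (\<forall>v\<in>verts K. Xstab K k v \<psi> = \<psi>) \<and>
                     (\<forall>f\<in>tris K. Zstab K k f \<psi> = \<psi>))}"

definition acochain :: "nat \<Rightarrow> 'v config \<Rightarrow> 'v set \<Rightarrow> nat" where
  "acochain k z = (\<lambda>e. if z k e then 1 else 0)"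

definition Uprime :: "('v \<Rightarrow> 'v \<Rightarrow> bool) \<Rightarrow> 'v set set \<Rightarrow> nat \<Rightarrow> nat \<Rightarrow> 'v state \<Rightarrow> 'v state" where
  "Uprime br A i j \<psi> = (\<lambda>z. (\<Prod>f\<in>A. (let xs = olist br f in
        if z i {xs!0, xs!1} \<and> z j {xs!1, xs!2} then -1 else 1)) * \<psi> z)"

definition diag_op :: "('v config \<Rightarrow> complex) \<Rightarrow> 'v state \<Rightarrow> 'v state" where
  "diag_op ph \<psi> = (\<lambda>z. ph z * \<psi> z)"

text \<open>Phase of the logical CZ[(b;i),(c;j)] on a basis configuration:
(-1)^(m^(i)_b m^(j)_c).\<close>
definition lcz_phase :: "'v set set \<Rightarrow> 'b set \<Rightarrow> ('b \<Rightarrow> 'v set \<Rightarrow> nat) \<Rightarrow> 'b \<Rightarrow> nat \<Rightarrow> 'b \<Rightarrow> nat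
     \<Rightarrow> 'v config \<Rightarrow> complex" where
  "lcz_phase K B beta b i c j z =
     (-1) ^ (coeff K B beta (acochain i z) b * coeff K B beta (acochain j z) c)"

definition logical_CZ :: "'v set set \<Rightarrow> 'b set \<Rightarrow> ('b \<Rightarrow> 'v set \<Rightarrow> nat) \<Rightarrow> 'b \<Rightarrow> nat \<Rightarrow> 'b \<Rightarrow> nat
     \<Rightarrow> 'v state \<Rightarrow> 'v state" where
  "logical_CZ K B beta b i c j = diag_op (lcz_phase K B beta b i c j)"

text \<open>The product over b, c in B of logical_CZ[(b;i),(c;j)]^(n b c); all factors
are diagonal, so the product is the diagonal operator with the product phase.\<close>
definition prod_logical_CZ :: "'v set set \<Rightarrow> 'b set \<Rightarrow> ('b \<Rightarrow> 'v set \<Rightarrow> nat) \<Rightarrow> nat \<Rightarrow> nat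
     \<Rightarrow> ('b \<Rightarrow> 'b \<Rightarrow> nat) \<Rightarrow> 'v state \<Rightarrow> 'v state" where
  "prod_logical_CZ K B beta i j n =
     diag_op (\<lambda>z. \<Prod>b\<in>B. \<Prod>c\<in>B. (lcz_phase K B beta b i c j z) ^ n b c)"

end

theory Submission
  imports Defs "HOL-Library.Z2"
begin

text \<open>Work in \<int>/2. On the support of a code state the cochains a^(i) and a^(j) are
  cocycles. Poincare duality, [M] \<inter> \<alpha> = [A] + \<partial>C, turns the phase \<integral>_A a^(i) \<union> a^(j) of U'
  into \<integral>_M \<alpha> \<union> a^(i) \<union> a^(j), since the cocycle a^(i) \<union> a^(j) integrates to zero over \<partial>C.
  The triple integral depends only on the classes of a^(i) and a^(j): replacing a by
  a + d\<lambda> changes \<alpha> \<union> a \<union> b by the coboundary of \<alpha> \<union> \<lambda> \<union> b, whose integral vanishes because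
  every triangle lies in exactly two tetrahedra. Hence the phase is invariant under the vertex
  stabilizers, which change one a^(k) by a coboundary, and by trilinearity it equals
  \<Sum> m^(i)_\<beta> m^(j)_\<gamma> \<integral>_M \<alpha> \<union> \<beta> \<union> \<gamma>, the phase of the product of logical CZ gates.\<close>

declare add_bit_eq_xor [simp del] mult_bit_eq_and [simp del]
  \<comment> \<open>compute in bit as in the ring \<int>/2 rather than with xor and and\<close>

section \<open>Ordered simplices\<close>

definition strict_total_on :: "('v \<Rightarrow> 'v \<Rightarrow> bool) \<Rightarrow> 'v set \<Rightarrow> bool" where
  "strict_total_on r s \<longleftrightarrow> (\<forall>x\<in>s. \<not> r x x) \<and> (\<forall>x\<in>s. \<forall>y\<in>s. x \<noteq> y \<longrightarrow> r x y \<or> r y x) \<and>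
     (\<forall>x\<in>s. \<forall>y\<in>s. \<forall>z\<in>s. r x y \<longrightarrow> r y z \<longrightarrow> r x z)"

lemma strict_total_on_subset: "strict_total_on r s \<Longrightarrow> s' \<subseteq> s \<Longrightarrow> strict_total_on r s'"
  unfolding strict_total_on_def by blast

lemma strict_total_on_has_least:
  "finite s \<Longrightarrow> s \<noteq> {} \<Longrightarrow> strict_total_on r s \<Longrightarrow> \<exists>x\<in>s. \<forall>y\<in>s. y \<noteq> x \<longrightarrow> r x y"
proof (induction s rule: finite_ne_induct)
  case (singleton x)
  then show ?case by simp
next
  case (insert a s)
  obtain m where m: "m \<in> s" "\<forall>y\<in>s. y \<noteq> m \<longrightarrow> r m y"
    using insert strict_total_on_subset[OF insert.prems, of s] by blast
  have "a \<noteq> m" using insert.hyps m(1) by auto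
  then have total: "r a m \<or> r m a"
    using insert.prems m(1) unfolding strict_total_on_def by blast
  have trans: "r a y" if "r a m" "r m y" "y \<in> s" for y
    using insert.prems m(1) that unfolding strict_total_on_def by blast
  show ?case
  proof (cases "r a m")
    case True
    then have "\<forall>y\<in>insert a s. y \<noteq> a \<longrightarrow> r a y" using m trans by auto
    then show ?thesis by blast
  next
    case False
    then have "\<forall>y\<in>insert a s. y \<noteq> m \<longrightarrow> r m y" using m total by auto
    then show ?thesis using m(1) by blast
  qed
qed

lemma strict_total_on_sorted_list:
  "finite s \<Longrightarrow> strict_total_on r s \<Longrightarrow> \<exists>xs. set xs = s \<and> sorted_wrt r xs"
proof (induction s rule: finite_remove_induct)
  case empty
  then show ?case by simp
next
  case (remove s)
  obtain x where x: "x \<in> s" "\<forall>y\<in>s. y \<noteq> x \<longrightarrow> r x y"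
    using strict_total_on_has_least[OF remove.hyps(1,2) remove.prems] by blast
  obtain xs where xs: "set xs = s - {x}" "sorted_wrt r xs"
    using remove.IH[OF x(1) strict_total_on_subset[OF remove.prems Diff_subset]] by blast
  have "set (x # xs) = s" "sorted_wrt r (x # xs)"
    using x xs by auto
  then show ?case by blast
qed

lemma sorted_wrt_set_unique:
  "strict_total_on r (set xs) \<Longrightarrow> sorted_wrt r xs \<Longrightarrow> sorted_wrt r ys \<Longrightarrow> set ys = set xs \<Longrightarrow> ys = xs"
proof (induction xs arbitrary: ys)
  case Nil
  then show ?case by simp
next
  case (Cons x xs)
  then obtain y ys' where ys: "ys = y # ys'" by (cases ys) auto
  have irrefl: "\<not> r u u" and trans: "r x u \<Longrightarrow> r u x \<Longrightarrow> r x x" if "u \<in> set (x # xs)" for u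
    using Cons.prems(1) that unfolding strict_total_on_def by auto
  have "x = y"
  proof (rule ccontr)
    assume "x \<noteq> y"
    then have "r x y" "r y x" using Cons.prems(2-4) ys by auto
    then show False using irrefl trans Cons.prems(4) ys by auto
  qed
  moreover have "x \<notin> set xs" "x \<notin> set ys'"
    using Cons.prems(2,3) ys irrefl \<open>x = y\<close> by auto
  ultimately have "set ys' = set xs"
    using Cons.prems(4) ys by auto
  moreover have "strict_total_on r (set xs)"
    using Cons.prems(1) strict_total_on_subset by (metis set_subset_Cons)
  ultimately show ?case
    using Cons.IH[of ys'] Cons.prems(2,3) ys \<open>x = y\<close> by simp
qed

lemma olist_eqI: "strict_total_on r s \<Longrightarrow> set xs = s \<Longrightarrow> sorted_wrt r xs \<Longrightarrow> olist r s = xs"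
  unfolding olist_def by (rule the_equality) (use sorted_wrt_set_unique in auto)

lemma sorted_wrt_irrefl_distinct: "(\<And>x. \<not> r x x) \<Longrightarrow> sorted_wrt r xs \<Longrightarrow> distinct xs"
  by (induction xs) auto

lemma edge_of_tet: "t \<in> K \<Longrightarrow> {x, y} \<subseteq> t \<Longrightarrow> x \<noteq> y \<Longrightarrow> {x, y} \<in> edges K"
  unfolding edges_def by auto

lemma tri_of_tet: "t \<in> K \<Longrightarrow> {x, y, z} \<subseteq> t \<Longrightarrow> distinct [x, y, z] \<Longrightarrow> {x, y, z} \<in> tris K"
  unfolding tris_def by auto

lemma closed_3manifold_tet: "closed_3manifold K \<Longrightarrow> t \<in> K \<Longrightarrow> finite t \<and> card t = 4"
  unfolding closed_3manifold_def by (auto intro: card_ge_0_finite)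

lemma branching_irrefl: "branching K br \<Longrightarrow> \<not> br x x"
  unfolding branching_def by (elim conjE) (erule allE)

lemma branching_asym:
  "branching K br \<Longrightarrow> e \<in> edges K \<Longrightarrow> u \<in> e \<Longrightarrow> w \<in> e \<Longrightarrow> u \<noteq> w \<Longrightarrow> br u w \<longleftrightarrow> \<not> br w u"
  unfolding branching_def
  by (elim conjE) (drule bspec, assumption, drule bspec, assumption, drule bspec, assumption, simp)

lemma branching_trans:
  "branching K br \<Longrightarrow> f \<in> tris K \<Longrightarrow> x \<in> f \<Longrightarrow> y \<in> f \<Longrightarrow> z \<in> f \<Longrightarrow> br x y \<Longrightarrow> br y z \<Longrightarrow> br x z"
  unfolding branching_def
  by (elim conjE) (drule bspec, assumption, drule bspec, assumption, drule bspec, assumption,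
      drule bspec, assumption, simp)

lemma branching_strict_total_on:
  assumes "branching K br" "t \<in> K"
  shows "strict_total_on br t"
  unfolding strict_total_on_def
proof (intro conjI ballI impI)
  show "\<not> br x x" for x
    using branching_irrefl[OF assms(1)] .
  show "br x y \<or> br y x" if "x \<in> t" "y \<in> t" "x \<noteq> y" for x y
    using branching_asym[OF assms(1) edge_of_tet[OF assms(2)], of x y x y] that by simp
  show "br x z" if "x \<in> t" "y \<in> t" "z \<in> t" "br x y" "br y z" for x y z
  proof -
    have "x \<noteq> y" "y \<noteq> z" using that branching_irrefl[OF assms(1)] by auto
    moreover have "x \<noteq> z"
      using branching_asym[OF assms(1) edge_of_tet[OF assms(2)], of x y x y] that \<open>x \<noteq> y\<close> by auto
    ultimately show ?thesis
      using branching_trans[OF assms(1) tri_of_tet[OF assms(2)], of x y z x y z] that by simp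
  qed
qed

lemma olist_tet:
  assumes "closed_3manifold K" "branching K br" "t \<in> K"
  obtains x0 x1 x2 x3 where "t = {x0, x1, x2, x3}" "distinct [x0, x1, x2, x3]"
    "olist br t = [x0, x1, x2, x3]"
    "olist br {x1, x2, x3} = [x1, x2, x3]" "olist br {x0, x2, x3} = [x0, x2, x3]"
    "olist br {x0, x1, x3} = [x0, x1, x3]" "olist br {x0, x1, x2} = [x0, x1, x2]"
proof -
  have total: "strict_total_on br t" using branching_strict_total_on[OF assms(2,3)] .
  obtain xs where xs: "set xs = t" "sorted_wrt br xs"
    using strict_total_on_sorted_list total closed_3manifold_tet[OF assms(1,3)] by blast
  have "distinct xs"
    using sorted_wrt_irrefl_distinct[OF branching_irrefl[OF assms(2)] xs(2)] .
  then have "length xs = 4" using xs(1) closed_3manifold_tet[OF assms(1,3)] distinct_card by fastforce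
  then obtain x0 x1 x2 x3 where x: "xs = [x0, x1, x2, x3]"
    by (auto simp: numeral_eq_Suc length_Suc_conv)
  have face: "olist br (set ys) = ys" if "set ys \<subseteq> t" "sorted_wrt br ys" for ys
    using olist_eqI strict_total_on_subset[OF total] that by blast
  have "olist br t = [x0, x1, x2, x3]"
    using olist_eqI[OF total xs] x by simp
  moreover have "olist br {x1, x2, x3} = [x1, x2, x3]" "olist br {x0, x2, x3} = [x0, x2, x3]"
    "olist br {x0, x1, x3} = [x0, x1, x3]" "olist br {x0, x1, x2} = [x0, x1, x2]"
    using face[of "[x1, x2, x3]"] face[of "[x0, x2, x3]"] face[of "[x0, x1, x3]"]
      face[of "[x0, x1, x2]"] xs x by auto
  moreover have "t = {x0, x1, x2, x3}" "distinct [x0, x1, x2, x3]"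
    using xs(1) x \<open>distinct xs\<close> by auto
  ultimately show ?thesis using that by blast
qed

lemma subsets_card_pred:
  assumes "finite s" "card s = Suc n"
  shows "{f. f \<subseteq> s \<and> card f = n} = (\<lambda>x. s - {x}) ` s"
proof (intro equalityI subsetI)
  fix f assume "f \<in> {f. f \<subseteq> s \<and> card f = n}"
  then have f: "f \<subseteq> s" "card f = n" by auto
  moreover have "f \<noteq> s" using f assms by auto
  ultimately obtain x where x: "x \<in> s" "x \<notin> f" by blast
  then have "f = s - {x}"
    using f assms by (intro card_subset_eq) (auto simp: card_Diff_singleton)
  then show "f \<in> (\<lambda>x. s - {x}) ` s" using x by blast
qed (use assms in \<open>auto simp: card_Diff_singleton\<close>)

lemma sum_subsets_card_pred:
  assumes "finite s" "card s = Suc n"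
  shows "(\<Sum>f | f \<subseteq> s \<and> card f = n. g f) = (\<Sum>x\<in>s. g (s - {x}))"
proof -
  have "inj_on (\<lambda>x. s - {x}) s" by (rule inj_onI) auto
  then show ?thesis by (simp add: subsets_card_pred[OF assms] sum.reindex)
qed

lemma sum_faces_tet:
  assumes "t \<in> K" "t = {x0, x1, x2, x3}" "distinct [x0, x1, x2, x3]"
  shows "(\<Sum>f\<in>{f\<in>tris K. f \<subseteq> t}. X f) = X {x1, x2, x3} + X {x0, x2, x3} + X {x0, x1, x3} + X {x0, x1, x2}"
proof -
  have "{f\<in>tris K. f \<subseteq> t} = {f. f \<subseteq> {x0, x1, x2, x3} \<and> card f = 3}"
    using assms(1,2) unfolding tris_def by auto
  then show ?thesis
    by (simp only:, subst sum_subsets_card_pred)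
      (use assms(3) in \<open>auto simp: insert_Diff_if insert_commute add.assoc\<close>)
qed

lemma finite_tris: assumes "closed_3manifold K" shows "finite (tris K)"
proof -
  have "finite (\<Union>K)" using assms closed_3manifold_tet unfolding closed_3manifold_def by blast
  moreover have "tris K \<subseteq> Pow (\<Union>K)" unfolding tris_def by auto
  ultimately show ?thesis by (meson finite_Pow_iff finite_subset)
qed

lemma sum_incidence_swap:
  assumes "finite S" "finite T"
  shows "(\<Sum>s\<in>S. \<Sum>x\<in>{x\<in>T. R x s}. X x) = (\<Sum>x\<in>T. of_nat (card {s\<in>S. R x s}) * X x)"
  using sum.swap_restrict[OF assms, of "\<lambda>s x. X x" "\<lambda>s x. R x s"] by simp

lemma card_tets_containing_tri:
  assumes M: "closed_3manifold K" and f: "f \<in> tris K"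
  shows "card {t\<in>K. f \<subseteq> t} = 2"
proof -
  obtain t0 where t0: "t0 \<in> K" "f \<subseteq> t0" "card f = 3"
    using f unfolding tris_def by blast
  then obtain v where v: "v \<in> f" by fastforce
  let ?L = "vlink K v"
  have "v \<in> verts K" using t0 v unfolding verts_def by blast
  then have "closed_surface ?L"
    using M unfolding closed_3manifold_def sphere2_def by blast
  moreover have "f - {v} \<in> edges2 ?L"
  proof -
    have "t0 - {v} \<in> ?L" using t0 v unfolding vlink_def by blast
    moreover have "card (f - {v}) = 2" using t0(3) v by (simp add: card_ge_0_finite)
    ultimately show ?thesis using t0(2) unfolding edges2_def by blast
  qed
  ultimately have "card {g\<in>?L. f - {v} \<subseteq> g} = 2"
    unfolding closed_surface_def by blast
  moreover have "bij_betw (\<lambda>t. t - {v}) {t\<in>K. f \<subseteq> t} {g\<in>?L. f - {v} \<subseteq> g}"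
  proof (rule bij_betw_imageI)
    show "inj_on (\<lambda>t. t - {v}) {t\<in>K. f \<subseteq> t}"
      using v by (intro inj_onI) blast
    show "(\<lambda>t. t - {v}) ` {t\<in>K. f \<subseteq> t} = {g\<in>?L. f - {v} \<subseteq> g}"
    proof (intro equalityI subsetI)
      fix g assume "g \<in> (\<lambda>t. t - {v}) ` {t\<in>K. f \<subseteq> t}"
      then show "g \<in> {g\<in>?L. f - {v} \<subseteq> g}" using v unfolding vlink_def by blast
    next
      fix g assume "g \<in> {g\<in>?L. f - {v} \<subseteq> g}"
      then obtain t where "t \<in> K" "v \<in> t" "g = t - {v}" "f - {v} \<subseteq> g"
        unfolding vlink_def by blast
      then show "g \<in> (\<lambda>t. t - {v}) ` {t\<in>K. f \<subseteq> t}" by blast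
    qed
  qed
  ultimately show ?thesis by (simp add: bij_betw_same_card)
qed

lemma sum_faces_closed_3manifold:
  assumes "closed_3manifold K"
  shows "(\<Sum>t\<in>K. \<Sum>f\<in>{f\<in>tris K. f \<subseteq> t}. X f) = (0 :: bit)"
proof -
  have "finite K" using assms unfolding closed_3manifold_def by blast
  then have "(\<Sum>t\<in>K. \<Sum>f\<in>{f\<in>tris K. f \<subseteq> t}. X f) = (\<Sum>f\<in>tris K. of_nat (card {t\<in>K. f \<subseteq> t}) * X f)"
    by (rule sum_incidence_swap[OF _ finite_tris[OF assms]])
  also have "\<dots> = 0"
    using card_tets_containing_tri[OF assms] by simp
  finally show ?thesis .
qed

lemma of_nat_bit: "(of_nat n :: bit) = (if even n then 0 else 1)"
  by (induction n) auto

lemma of_nat_mod_2_bit: "(of_nat (n mod 2) :: bit) = of_nat n"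
  by (simp add: of_nat_bit)

lemma neg_one_power_cong_bit: "(of_nat m :: bit) = of_nat n \<Longrightarrow> (-1 :: 'a::ring_1) ^ m = (-1) ^ n"
  by (simp add: of_nat_bit minus_one_power_iff split: if_splits)

lemma cocycle1_bit:
  assumes "cocycle1 K a" "t \<in> K" "{x, y, z} \<subseteq> t" "distinct [x, y, z]"
  shows "(of_nat (a {x, z}) :: bit) = of_nat (a {x, y}) + of_nat (a {y, z})"
proof -
  have "{x, y, z} \<in> tris K" using tri_of_tet assms(2-4) .
  then have "even (\<Sum>e | e \<subseteq> {x, y, z} \<and> card e = 2. a e)"
    using assms(1) unfolding cocycle1_def by blast
  moreover have "(\<Sum>e | e \<subseteq> {x, y, z} \<and> card e = 2. a e) = a {y, z} + a {x, z} + a {x, y}"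
    by (subst sum_subsets_card_pred)
      (use assms(4) in \<open>auto simp: insert_Diff_if insert_commute add.assoc\<close>)
  ultimately show ?thesis by (auto simp: of_nat_bit)
qed

lemma cocycle1_lin_comb:
  assumes "\<And>b. b \<in> B \<Longrightarrow> cocycle1 K (beta b)"
  shows "cocycle1 K (\<lambda>e. \<Sum>b\<in>B. m b * beta b e)"
  unfolding cocycle1_def
proof
  fix f assume "f \<in> tris K"
  then have "even (\<Sum>b\<in>B. m b * (\<Sum>e | e \<subseteq> f \<and> card e = 2. beta b e))"
    using assms unfolding cocycle1_def by (intro dvd_sum) simp
  then show "even (\<Sum>e | e \<subseteq> f \<and> card e = 2. \<Sum>b\<in>B. m b * beta b e)"
    by (simp add: sum.swap[of _ _ B] sum_distrib_left)
qed

lemma coboundary_edge_bit: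
  assumes "\<forall>e\<in>edges K. even (a e + a' e + sum lam e)" "t \<in> K" "{x, y} \<subseteq> t" "x \<noteq> y"
  shows "(of_nat (a' {x, y}) :: bit) = of_nat (a {x, y}) + of_nat (lam x) + of_nat (lam y)"
proof -
  have "{x, y} \<in> edges K" using edge_of_tet assms(2-4) .
  then have "even (a {x, y} + a' {x, y} + sum lam {x, y})"
    using assms(1) by blast
  then show ?thesis
    using assms(4) by (auto simp: of_nat_bit)
qed

lemma cohom_basis_coeff:
  assumes "cohom_basis K B beta" "cocycle1 K a"
  shows "cohomologous1 K a (\<lambda>e. \<Sum>b\<in>B. coeff K B beta a b * beta b e)"
proof -
  let ?P = "\<lambda>a m. (\<forall>b\<in>B. m b \<in> {0, 1}) \<and> (\<forall>b. b \<notin> B \<longrightarrow> m b = 0) \<and>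
      cohomologous1 K a (\<lambda>e. \<Sum>b\<in>B. m b * beta b e)"
  have "\<forall>a. cocycle1 K a \<longrightarrow> (\<exists>!m. ?P a m)"
    using assms(1) unfolding cohom_basis_def by (elim conjE)
  then have "\<exists>!m. ?P a m"
    using assms(2) by simp
  then have "?P a (THE m. ?P a m)"
    by (rule theI')
  then show ?thesis
    unfolding coeff_def by (elim conjE)
qed

section \<open>Cup products\<close>

lemmas nth_Cons_upto_3 = nth_Cons_0 nth_Cons_Suc One_nat_def numeral_2_eq_2 numeral_3_eq_3

text \<open>On an ordered tetrahedron [0123], writing x_ij for the value of x on [v_i v_j], the
  next three identities say d(a \<union> b) = 0, \<alpha> \<union> d\<lambda> \<union> b = d(\<alpha> \<union> \<lambda> \<union> b) and
  \<alpha> \<union> a \<union> d\<lambda> = d(\<alpha> \<union> a \<union> \<lambda>) for cocycles \<alpha>, a, b over \<int>/2.\<close>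

lemma cup_coboundary_bit:
  fixes a01 a12 a02 b12 b23 b13 :: bit
  assumes "a02 = a01 + a12" "b13 = b12 + b23"
  shows "a12 * b23 + a02 * b23 + a01 * b13 + a01 * b12 = 0"
  using assms by (cases a01; cases a12; cases b12; cases b23) simp_all

lemma cup3_coboundary_mid_bit:
  fixes al01 al12 al02 a12 b12 b23 b13 l1 l2 :: bit
  assumes "al02 = al01 + al12" "b13 = b12 + b23"
  shows "al01 * (a12 + l1 + l2) * b23
    = al01 * a12 * b23 + (al12 * l2 * b23 + al02 * l2 * b23 + al01 * l1 * b13 + al01 * l1 * b12)"
  using assms by (cases al01; cases al12; cases a12; cases l1; cases l2; cases b12; cases b23) simp_all

lemma cup3_coboundary_last_bit:
  fixes al01 al12 al02 a12 a23 a13 b23 l2 l3 :: bit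
  assumes "al02 = al01 + al12" "a13 = a12 + a23"
  shows "al01 * a12 * (b23 + l2 + l3)
    = al01 * a12 * b23 + (al12 * a23 * l3 + al02 * a23 * l3 + al01 * a13 * l3 + al01 * a12 * l2)"
  using assms by (cases al01; cases al12; cases a12; cases a23; cases l2; cases l3; cases b23) simp_all

definition cup2 :: "('v \<Rightarrow> 'v \<Rightarrow> bool) \<Rightarrow> ('v set \<Rightarrow> nat) \<Rightarrow> ('v set \<Rightarrow> nat) \<Rightarrow> 'v set \<Rightarrow> nat" where
  "cup2 br a b f = (let xs = olist br f in a {xs!0, xs!1} * b {xs!1, xs!2})"

lemma sum_faces_cup2_cocycles:
  assumes M: "closed_3manifold K" and Br: "branching K br" and t: "t \<in> K"
    and a: "cocycle1 K a" and b: "cocycle1 K b"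
  shows "(\<Sum>f\<in>{f\<in>tris K. f \<subseteq> t}. (of_nat (cup2 br a b f) :: bit)) = 0"
proof -
  obtain x0 x1 x2 x3 where t_eq: "t = {x0, x1, x2, x3}" and d: "distinct [x0, x1, x2, x3]"
    and o: "olist br {x1, x2, x3} = [x1, x2, x3]" "olist br {x0, x2, x3} = [x0, x2, x3]"
      "olist br {x0, x1, x3} = [x0, x1, x3]" "olist br {x0, x1, x2} = [x0, x1, x2]"
    using olist_tet[OF M Br t] by metis
  have cocycles: "(of_nat (a {x0, x2}) :: bit) = of_nat (a {x0, x1}) + of_nat (a {x1, x2})"
     "(of_nat (b {x1, x3}) :: bit) = of_nat (b {x1, x2}) + of_nat (b {x2, x3})"
    using cocycle1_bit[OF a t] cocycle1_bit[OF b t] t_eq d by auto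
  show ?thesis
    unfolding sum_faces_tet[OF t t_eq d] cup2_def Let_def o of_nat_mult
    by (simp only: nth_Cons_upto_3) (rule cup_coboundary_bit[OF cocycles])
qed

text \<open>The cap-product adjunction \<langle>[M] \<inter> \<alpha>, g\<rangle> = \<langle>[M], \<alpha> \<union> g\<rangle>.\<close>

lemma sum_capM_mult:
  fixes g :: "'v set \<Rightarrow> 'a::comm_semiring_1"
  assumes M: "closed_3manifold K" and Br: "branching K br"
  shows "(\<Sum>f\<in>tris K. of_nat (capM K br al f) * g f)
    = (\<Sum>t\<in>K. let xs = olist br t in of_nat (al {xs!0, xs!1}) * g {xs!1, xs!2, xs!3})"
proof -
  define F where "F t = (let xs = olist br t in {xs!1, xs!2, xs!3})" for t
  define G where "G t = (let xs = olist br t in al {xs!0, xs!1})" for t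
  have "F ` K \<subseteq> tris K"
  proof
    fix f assume "f \<in> F ` K"
    then obtain t where t: "t \<in> K" "f = F t" by blast
    obtain x0 x1 x2 x3 where "t = {x0, x1, x2, x3}" "distinct [x0, x1, x2, x3]"
      "olist br t = [x0, x1, x2, x3]"
      using olist_tet[OF M Br t(1)] by metis
    then show "f \<in> tris K"
      using tri_of_tet[OF t(1), of x1 x2 x3] t(2) unfolding F_def by simp
  qed
  have "of_nat (capM K br al f) * g f = (\<Sum>t\<in>{t\<in>K. F t = f}. of_nat (G t) * g (F t))" for f
  proof -
    have "capM K br al f = (\<Sum>t\<in>{t\<in>K. F t = f}. G t)"
      unfolding capM_def F_def G_def Let_def by (rule sum.cong[OF Collect_cong refl]) blast
    then have "of_nat (capM K br al f) * g f = (\<Sum>t\<in>{t\<in>K. F t = f}. of_nat (G t) * g f)"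
      by (simp add: of_nat_sum sum_distrib_right)
    also have "\<dots> = (\<Sum>t\<in>{t\<in>K. F t = f}. of_nat (G t) * g (F t))"
      by (rule sum.cong) simp_all
    finally show ?thesis .
  qed
  then have "(\<Sum>f\<in>tris K. of_nat (capM K br al f) * g f)
      = (\<Sum>f\<in>tris K. \<Sum>t\<in>{t\<in>K. F t = f}. of_nat (G t) * g (F t))"
    by simp
  also have "\<dots> = (\<Sum>t\<in>K. of_nat (G t) * g (F t))"
    using M unfolding closed_3manifold_def
    by (intro sum.group finite_tris[OF M] \<open>F ` K \<subseteq> tris K\<close>) blast
  finally show ?thesis
    unfolding F_def G_def Let_def .
qed

lemma sum_cup2_poincare_dual:
  assumes M: "closed_3manifold K" and Br: "branching K br" and A: "A \<subseteq> tris K"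
    and pd: "poincare_dual K br A al" and a: "cocycle1 K a" and b: "cocycle1 K b"
  shows "(of_nat (\<Sum>f\<in>A. cup2 br a b f) :: bit) = of_nat (\<Sum>t\<in>K. cup3 br al a b t)"
proof -
  obtain C where C: "C \<subseteq> K" and dual:
    "\<And>f. f \<in> tris K \<Longrightarrow> even (capM K br al f + (if f \<in> A then 1 else 0) + card {t\<in>C. f \<subseteq> t})"
    using pd unfolding poincare_dual_def by blast
  define g where "g f = (of_nat (cup2 br a b f) :: bit)" for f
  have "finite C"
    using C M finite_subset unfolding closed_3manifold_def by blast
  have indicator: "(if f \<in> A then g f else 0)
      = of_nat (capM K br al f) * g f + of_nat (card {t\<in>C. f \<subseteq> t}) * g f" if "f \<in> tris K" for f
    using dual[OF that] by (cases "f \<in> A") (auto simp: of_nat_bit)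
  have "(of_nat (\<Sum>f\<in>A. cup2 br a b f) :: bit) = (\<Sum>f\<in>tris K. if f \<in> A then g f else 0)"
    using sum.inter_restrict[OF finite_tris[OF M], of g A] A by (simp add: g_def Int_absorb1)
  also have "\<dots> = (\<Sum>f\<in>tris K. of_nat (capM K br al f) * g f)
      + (\<Sum>f\<in>tris K. of_nat (card {t\<in>C. f \<subseteq> t}) * g f)"
    by (simp add: indicator sum.distrib[symmetric] cong: sum.cong)
  also have "(\<Sum>f\<in>tris K. of_nat (card {t\<in>C. f \<subseteq> t}) * g f) = 0"
  proof -
    have "(\<Sum>f\<in>tris K. of_nat (card {t\<in>C. f \<subseteq> t}) * g f) = (\<Sum>t\<in>C. \<Sum>f\<in>{f\<in>tris K. f \<subseteq> t}. g f)"
      by (rule sum_incidence_swap[OF \<open>finite C\<close> finite_tris[OF M], symmetric])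
    also have "\<dots> = 0"
      using sum_faces_cup2_cocycles[OF M Br _ a b] C unfolding g_def by (intro sum.neutral) blast
    finally show ?thesis .
  qed
  also have "(\<Sum>f\<in>tris K. of_nat (capM K br al f) * g f) = of_nat (\<Sum>t\<in>K. cup3 br al a b t)"
    unfolding sum_capM_mult[OF M Br] of_nat_sum
  proof (rule sum.cong)
    fix t assume t: "t \<in> K"
    obtain x0 x1 x2 x3 where "olist br t = [x0, x1, x2, x3]" "olist br {x1, x2, x3} = [x1, x2, x3]"
      using olist_tet[OF M Br t] by metis
    then show "(let xs = olist br t in of_nat (al {xs!0, xs!1}) * g {xs!1, xs!2, xs!3})
        = of_nat (cup3 br al a b t)"
      unfolding g_def cup2_def cup3_def Let_def by (simp add: mult.assoc)
  qed simp
  finally show ?thesis by simp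
qed

lemma sum_cup3_cohomologous_mid:
  assumes M: "closed_3manifold K" and Br: "branching K br"
    and al: "cocycle1 K al" and b: "cocycle1 K b" and aa': "cohomologous1 K a a'"
  shows "(of_nat (\<Sum>t\<in>K. cup3 br al a b t) :: bit) = of_nat (\<Sum>t\<in>K. cup3 br al a' b t)"
proof -
  obtain lam where lam: "\<forall>e\<in>edges K. even (a e + a' e + sum lam e)"
    using aa' unfolding cohomologous1_def by blast
  define X where "X f = (let xs = olist br f in
      (of_nat (al {xs!0, xs!1}) :: bit) * of_nat (lam (xs!1)) * of_nat (b {xs!1, xs!2}))" for f
    \<comment> \<open>\<alpha> \<union> \<lambda> \<union> b\<close>
  have "of_nat (cup3 br al a' b t) = of_nat (cup3 br al a b t) + (\<Sum>f\<in>{f\<in>tris K. f \<subseteq> t}. X f)"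
    if t: "t \<in> K" for t
  proof -
    obtain x0 x1 x2 x3 where t_eq: "t = {x0, x1, x2, x3}" and d: "distinct [x0, x1, x2, x3]"
      and o: "olist br t = [x0, x1, x2, x3]"
        "olist br {x1, x2, x3} = [x1, x2, x3]" "olist br {x0, x2, x3} = [x0, x2, x3]"
        "olist br {x0, x1, x3} = [x0, x1, x3]" "olist br {x0, x1, x2} = [x0, x1, x2]"
      by (rule olist_tet[OF M Br t])
    have cocycles: "(of_nat (al {x0, x2}) :: bit) = of_nat (al {x0, x1}) + of_nat (al {x1, x2})"
       "(of_nat (b {x1, x3}) :: bit) = of_nat (b {x1, x2}) + of_nat (b {x2, x3})"
      using cocycle1_bit[OF al t] cocycle1_bit[OF b t] t_eq d by auto
    have coboundary: "(of_nat (a' {x1, x2}) :: bit) = of_nat (a {x1, x2}) + of_nat (lam x1) + of_nat (lam x2)"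
      using coboundary_edge_bit[OF lam t, of x1 x2] t_eq d by simp
    show ?thesis
      unfolding sum_faces_tet[OF t t_eq d] X_def cup3_def Let_def o of_nat_mult
      by (simp only: nth_Cons_upto_3 coboundary) (rule cup3_coboundary_mid_bit[OF cocycles])
  qed
  then show ?thesis
    using sum_faces_closed_3manifold[OF M, of X] by (simp add: sum.distrib)
qed

lemma sum_cup3_cohomologous_last:
  assumes M: "closed_3manifold K" and Br: "branching K br"
    and al: "cocycle1 K al" and a: "cocycle1 K a" and bb': "cohomologous1 K b b'"
  shows "(of_nat (\<Sum>t\<in>K. cup3 br al a b t) :: bit) = of_nat (\<Sum>t\<in>K. cup3 br al a b' t)"
proof -
  obtain lam where lam: "\<forall>e\<in>edges K. even (b e + b' e + sum lam e)"
    using bb' unfolding cohomologous1_def by blast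
  define X where "X f = (let xs = olist br f in
      (of_nat (al {xs!0, xs!1}) :: bit) * of_nat (a {xs!1, xs!2}) * of_nat (lam (xs!2)))" for f
    \<comment> \<open>\<alpha> \<union> a \<union> \<lambda>\<close>
  have "of_nat (cup3 br al a b' t) = of_nat (cup3 br al a b t) + (\<Sum>f\<in>{f\<in>tris K. f \<subseteq> t}. X f)"
    if t: "t \<in> K" for t
  proof -
    obtain x0 x1 x2 x3 where t_eq: "t = {x0, x1, x2, x3}" and d: "distinct [x0, x1, x2, x3]"
      and o: "olist br t = [x0, x1, x2, x3]"
        "olist br {x1, x2, x3} = [x1, x2, x3]" "olist br {x0, x2, x3} = [x0, x2, x3]"
        "olist br {x0, x1, x3} = [x0, x1, x3]" "olist br {x0, x1, x2} = [x0, x1, x2]"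
      by (rule olist_tet[OF M Br t])
    have cocycles: "(of_nat (al {x0, x2}) :: bit) = of_nat (al {x0, x1}) + of_nat (al {x1, x2})"
       "(of_nat (a {x1, x3}) :: bit) = of_nat (a {x1, x2}) + of_nat (a {x2, x3})"
      using cocycle1_bit[OF al t] cocycle1_bit[OF a t] t_eq d by auto
    have coboundary: "(of_nat (b' {x2, x3}) :: bit) = of_nat (b {x2, x3}) + of_nat (lam x2) + of_nat (lam x3)"
      using coboundary_edge_bit[OF lam t, of x2 x3] t_eq d by simp
    show ?thesis
      unfolding sum_faces_tet[OF t t_eq d] X_def cup3_def Let_def o of_nat_mult
      by (simp only: nth_Cons_upto_3 coboundary) (rule cup3_coboundary_last_bit[OF cocycles])
  qed
  then show ?thesis
    using sum_faces_closed_3manifold[OF M, of X] by (simp add: sum.distrib)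
qed

lemma sum_cup3_cohomologous:
  assumes "closed_3manifold K" "branching K br" "cocycle1 K al" "cocycle1 K a'" "cocycle1 K b"
    and "cohomologous1 K a a'" "cohomologous1 K b b'"
  shows "(of_nat (\<Sum>t\<in>K. cup3 br al a b t) :: bit) = of_nat (\<Sum>t\<in>K. cup3 br al a' b' t)"
  using sum_cup3_cohomologous_mid[OF assms(1-3,5,6)] sum_cup3_cohomologous_last[OF assms(1-4,7)]
  by simp

lemma sum_cup3_lin_comb:
  "(\<Sum>t\<in>K. cup3 br al (\<lambda>e. \<Sum>b\<in>B. m b * beta b e) (\<lambda>e. \<Sum>c\<in>B. n c * beta c e) t)
    = (\<Sum>b\<in>B. \<Sum>c\<in>B. m b * n c * (\<Sum>t\<in>K. cup3 br al (beta b) (beta c) t))"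
proof -
  have "cup3 br al (\<lambda>e. \<Sum>b\<in>B. m b * beta b e) (\<lambda>e. \<Sum>c\<in>B. n c * beta c e) t
      = (\<Sum>b\<in>B. \<Sum>c\<in>B. m b * n c * cup3 br al (beta b) (beta c) t)" for t
    unfolding cup3_def Let_def by (simp add: sum_distrib_left sum_distrib_right mult_ac)
  then have "(\<Sum>t\<in>K. cup3 br al (\<lambda>e. \<Sum>b\<in>B. m b * beta b e) (\<lambda>e. \<Sum>c\<in>B. n c * beta c e) t)
      = (\<Sum>t\<in>K. \<Sum>b\<in>B. \<Sum>c\<in>B. m b * n c * cup3 br al (beta b) (beta c) t)"
    by simp
  also have "\<dots> = (\<Sum>b\<in>B. \<Sum>c\<in>B. \<Sum>t\<in>K. m b * n c * cup3 br al (beta b) (beta c) t)"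
    by (subst sum.swap) (simp only: sum.swap[of _ K])
  finally show ?thesis
    by (simp add: sum_distrib_left)
qed

section \<open>The operator U' on the code space\<close>

definition flip_config :: "'v set set \<Rightarrow> nat \<Rightarrow> 'v \<Rightarrow> 'v config \<Rightarrow> 'v config" where
  "flip_config K k v z = (\<lambda>k' e. if k' = k \<and> e \<in> edges K \<and> v \<in> e then \<not> z k' e else z k' e)"

lemma Xstab_eq_flip_config: "Xstab K k v \<psi> z = \<psi> (flip_config K k v z)"
  unfolding Xstab_def flip_config_def by simp

lemma cohomologous1_acochain_flip_config:
  "cohomologous1 K (acochain k' (flip_config K k v z)) (acochain k' z)"
  unfolding cohomologous1_def
proof (intro exI ballI)
  fix e assume "e \<in> edges K"
  then obtain x y where e: "e = {x, y}" "x \<noteq> y"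
    unfolding edges_def by (auto simp: card_2_iff)
  show "even (acochain k' (flip_config K k v z) e + acochain k' z e
      + (\<Sum>u\<in>e. if k' = k \<and> u = v then 1 else 0))"
    using \<open>e \<in> edges K\<close> e by (auto simp: acochain_def flip_config_def)
qed

lemma code_space_acochain_cocycle1:
  assumes "\<psi> \<in> code_space K" "\<psi> z \<noteq> 0" "k \<in> {1, 2, 3}"
  shows "cocycle1 K (acochain k z)"
  unfolding cocycle1_def
proof
  fix f assume f: "f \<in> tris K"
  let ?E = "{e. e \<subseteq> f \<and> card e = 2}"
  have "Zstab K k f \<psi> z = \<psi> z"
    using assms(1,3) f unfolding code_space_def by auto
  then have "(-1 :: complex) ^ card {e. e \<subseteq> f \<and> card e = 2 \<and> z k e} = 1"
    using assms(2) unfolding Zstab_def by simp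
  then have "even (card {e. e \<subseteq> f \<and> card e = 2 \<and> z k e})"
    by (metis neg_one_odd_power one_neq_neg_one)
  moreover have "{e \<in> ?E. z k e} = {e. e \<subseteq> f \<and> card e = 2 \<and> z k e}"
    by auto
  moreover have "finite ?E"
  proof -
    have "finite f" using f unfolding tris_def by (auto intro: card_ge_0_finite)
    then show ?thesis by (intro finite_subset[of ?E "Pow f"]) auto
  qed
  ultimately show "even (\<Sum>e\<in>?E. acochain k z e)"
    by (simp add: acochain_def sum.If_cases Int_def)
qed

lemma diag_op_cong: "(\<And>z. \<psi> z \<noteq> 0 \<Longrightarrow> ph z = ph' z) \<Longrightarrow> diag_op ph \<psi> = diag_op ph' \<psi>"
  unfolding diag_op_def by (metis mult_zero_right)

lemma Uprime_eq_diag_op: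
  "Uprime br A i j = diag_op (\<lambda>z. (-1) ^ (\<Sum>f\<in>A. cup2 br (acochain i z) (acochain j z) f))"
proof -
  have "(let xs = olist br f in if z i {xs!0, xs!1} \<and> z j {xs!1, xs!2} then -1 else 1)
      = (-1 :: complex) ^ cup2 br (acochain i z) (acochain j z) f" for f z
    unfolding cup2_def acochain_def Let_def by simp
  then show ?thesis
    unfolding Uprime_def diag_op_def by (simp add: power_sum)
qed

lemma prod_logical_CZ_eq_diag_op:
  "prod_logical_CZ K B beta i j n = diag_op (\<lambda>z. (-1) ^ (\<Sum>b\<in>B. \<Sum>c\<in>B.
     coeff K B beta (acochain i z) b * coeff K B beta (acochain j z) c * n b c))"
  unfolding prod_logical_CZ_def lcz_phase_def by (simp add: power_mult power_sum)

definition cup3_phase ::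
    "'v set set \<Rightarrow> ('v \<Rightarrow> 'v \<Rightarrow> bool) \<Rightarrow> ('v set \<Rightarrow> nat) \<Rightarrow> nat \<Rightarrow> nat \<Rightarrow> 'v config \<Rightarrow> complex" where
  "cup3_phase K br al i j z = (-1) ^ (\<Sum>t\<in>K. cup3 br al (acochain i z) (acochain j z) t)"

lemma Uprime_eq_cup3_phase:
  assumes M: "closed_3manifold K" and Br: "branching K br" and A: "A \<subseteq> tris K"
    and pd: "poincare_dual K br A al" and i: "i \<in> {1, 2, 3}" and j: "j \<in> {1, 2, 3}"
    and \<psi>: "\<psi> \<in> code_space K"
  shows "Uprime br A i j \<psi> = diag_op (cup3_phase K br al i j) \<psi>"
  unfolding Uprime_eq_diag_op cup3_phase_def
proof (rule diag_op_cong)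
  fix z assume "\<psi> z \<noteq> 0"
  show "(-1 :: complex) ^ (\<Sum>f\<in>A. cup2 br (acochain i z) (acochain j z) f)
      = (-1) ^ (\<Sum>t\<in>K. cup3 br al (acochain i z) (acochain j z) t)"
    by (intro neg_one_power_cong_bit sum_cup2_poincare_dual[OF M Br A pd]
        code_space_acochain_cocycle1[OF \<psi> \<open>\<psi> z \<noteq> 0\<close>] i j)
qed

lemma diag_op_cup3_phase_in_code_space:
  assumes M: "closed_3manifold K" and Br: "branching K br" and al: "cocycle1 K al"
    and i: "i \<in> {1, 2, 3}" and j: "j \<in> {1, 2, 3}" and \<psi>: "\<psi> \<in> code_space K"
  shows "diag_op (cup3_phase K br al i j) \<psi> \<in> code_space K"
proof -
  have "Xstab K k v (diag_op (cup3_phase K br al i j) \<psi>) z = diag_op (cup3_phase K br al i j) \<psi> z"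
    if k: "k \<in> {1, 2, 3}" and v: "v \<in> verts K" for k v z
  proof -
    let ?z' = "flip_config K k v z"
    have flip: "\<psi> ?z' = \<psi> z"
      using \<psi> k v Xstab_eq_flip_config[of K k v \<psi> z] unfolding code_space_def by auto
    show ?thesis
    proof (cases "\<psi> z = 0")
      case True
      then show ?thesis
        unfolding Xstab_eq_flip_config diag_op_def flip by simp
    next
      case False
      then have "\<psi> ?z' \<noteq> 0" using flip by simp
      then have "cup3_phase K br al i j ?z' = cup3_phase K br al i j z"
        unfolding cup3_phase_def
        by (intro neg_one_power_cong_bit sum_cup3_cohomologous[OF M Br al]
            cohomologous1_acochain_flip_config code_space_acochain_cocycle1[OF \<psi>] i j False)
      then show ?thesis
        unfolding Xstab_eq_flip_config diag_op_def flip by simp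
    qed
  qed
  moreover have "Zstab K k f (diag_op ph \<psi>) = diag_op ph (Zstab K k f \<psi>)" for k f ph
    unfolding Zstab_def diag_op_def by (simp add: mult.left_commute)
  ultimately show ?thesis
    using \<psi> unfolding code_space_def hilbert_def by (auto simp: diag_op_def)
qed

lemma diag_op_cup3_phase_eq_prod_logical_CZ:
  assumes M: "closed_3manifold K" and Br: "branching K br" and al: "cocycle1 K al"
    and basis: "cohom_basis K B beta" and i: "i \<in> {1, 2, 3}" and j: "j \<in> {1, 2, 3}"
    and \<psi>: "\<psi> \<in> code_space K"
  shows "diag_op (cup3_phase K br al i j) \<psi>
    = prod_logical_CZ K B beta i j (\<lambda>b c. (\<Sum>t\<in>K. cup3 br al (beta b) (beta c) t) mod 2) \<psi>"
  unfolding prod_logical_CZ_eq_diag_op cup3_phase_def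
proof (rule diag_op_cong)
  fix z assume "\<psi> z \<noteq> 0"
  define a where "a = acochain i z"
  define b where "b = acochain j z"
  have a: "cocycle1 K a" and b: "cocycle1 K b"
    unfolding a_def b_def using code_space_acochain_cocycle1[OF \<psi> \<open>\<psi> z \<noteq> 0\<close>] i j by auto
  have beta: "\<And>c. c \<in> B \<Longrightarrow> cocycle1 K (beta c)"
    using basis unfolding cohom_basis_def by blast
  have "(of_nat (\<Sum>t\<in>K. cup3 br al a b t) :: bit) = of_nat (\<Sum>t\<in>K. cup3 br al
      (\<lambda>e. \<Sum>c\<in>B. coeff K B beta a c * beta c e) (\<lambda>e. \<Sum>d\<in>B. coeff K B beta b d * beta d e) t)"
    by (intro sum_cup3_cohomologous M Br al b cocycle1_lin_comb beta
        cohom_basis_coeff[OF basis a] cohom_basis_coeff[OF basis b])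
  also have "\<dots> = of_nat (\<Sum>c\<in>B. \<Sum>d\<in>B. coeff K B beta a c * coeff K B beta b d
      * ((\<Sum>t\<in>K. cup3 br al (beta c) (beta d) t) mod 2))"
    unfolding sum_cup3_lin_comb by (simp only: of_nat_sum of_nat_mult of_nat_mod_2_bit)
  finally show "(-1 :: complex) ^ (\<Sum>t\<in>K. cup3 br al (acochain i z) (acochain j z) t)
      = (-1) ^ (\<Sum>c\<in>B. \<Sum>d\<in>B. coeff K B beta (acochain i z) c * coeff K B beta (acochain j z) d
          * ((\<Sum>t\<in>K. cup3 br al (beta c) (beta d) t) mod 2))"
    unfolding a_def b_def by (rule neg_one_power_cong_bit)
qed

theorem mainTheorem3:
  fixes K :: "'v set set" and br :: "'v \<Rightarrow> 'v \<Rightarrow> bool"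
    and A :: "'v set set" and alpha1 :: "'v set \<Rightarrow> nat"
    and B :: "'b set" and beta :: "'b \<Rightarrow> 'v set \<Rightarrow> nat"
    and i j :: nat
  assumes "closed_3manifold K"
    and "branching K br"
    and "cycle2 K A"
    and "cohom_basis K B beta"
    and "poincare_dual K br A alpha1"
    and "i \<in> {1, 2, 3}" and "j \<in> {1, 2, 3}" and "i \<noteq> j"
  shows "(\<forall>\<psi>\<in>code_space K. Uprime br A i j \<psi> \<in> code_space K) \<and>
         (\<forall>\<psi>\<in>code_space K. Uprime br A i j \<psi> =
            prod_logical_CZ K B beta i j
              (\<lambda>b c. (\<Sum>t\<in>K. cup3 br alpha1 (beta b) (beta c) t) mod 2) \<psi>)"
proof -
  have A: "A \<subseteq> tris K"
    using assms(3) unfolding cycle2_def by blast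
  have alpha1: "cocycle1 K alpha1"
    using assms(5) unfolding poincare_dual_def by blast
  have "Uprime br A i j \<psi> = diag_op (cup3_phase K br alpha1 i j) \<psi>" if "\<psi> \<in> code_space K" for \<psi>
    using Uprime_eq_cup3_phase[OF assms(1,2) A assms(5-7) that] .
  then show ?thesis
    using diag_op_cup3_phase_in_code_space[OF assms(1,2) alpha1 assms(6,7)]
      diag_op_cup3_phase_eq_prod_logical_CZ[OF assms(1,2) alpha1 assms(4,6,7)]
    by simp
qed

end
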